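(* Let $n\ge2$, $r\ge1$, let $V_1,\dots,V_r\in\mathrm{Mat}(n,\mathbb{C})$ satisfy $\operatorname{tr}(V_s^*V_m)=\delta_{sm}$, and define $$P_{\mathcal T}=\sum_{s=1}^r\sum_{a,b,c,d=1}^n (V_s)_{ab}(\bar V_s)_{cd}\,E^{(n)}_{ac}\otimes E^{(n)}_{bd},\qquad A_{\mathcal T}=\sum_{s,m=1}^r E^{(r)}_{sm}\otimes\Big(\sum_{i=1}^r V_i\bar V_sV_m^tV_i^*\Big).$$ For $A\in\mathrm{Mat}(rn,\mathbb{C})$ and a positive integer $k$ let $$G[A;k]=\big(k-rn+\operatorname{tr}A\big)^2-k\big(k-rn+\operatorname{tr}A^2\big).$$ If, for some real $Q>0$, $P_{\mathcal T}$ is a solution of $P^*=P$, $P^2=P$, $Q^2(P_1P_2P_1-P_2P_1P_2)=P_1-P_2$ (with $P_1=P_{\mathcal T}\otimes I_n$, $P_2=I_n\otimes P_{\mathcal T}$), then there exists a positive integer $k$ such that $G[A_{\mathcal T};k]=0$.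
   Context: $E^{(p)}_{ab}\in\mathrm{Mat}(p,\mathbb{C})$ is the matrix unit with $(E^{(p)}_{ab})_{ij}=\delta_{ai}\delta_{bj}$; $\bar V$ is entrywise complex conjugate, $V^t$ transpose, $V^*$ conjugate transpose; $\otimes$ is the Kronecker product. *)

theory Defs
  imports Complex_Main "Jordan_Normal_Form.Matrix"
begin

definition cmat_conj :: "complex mat \<Rightarrow> complex mat" where
  "cmat_conj A = mat (dim_row A) (dim_col A) (\<lambda>(i,j). cnj (A $$ (i,j)))"

definition cmat_adj :: "complex mat \<Rightarrow> complex mat" where
  "cmat_adj A = transpose_mat (cmat_conj A)"

definition mtrace :: "complex mat \<Rightarrow> complex" where
  "mtrace A = (\<Sum>i<dim_row A. A $$ (i,i))"

definition kron :: "complex mat \<Rightarrow> complex mat \<Rightarrow> complex mat" where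
  "kron A B = mat (dim_row A * dim_row B) (dim_col A * dim_col B)
     (\<lambda>(i,j). A $$ (i div dim_row B, j div dim_col B) * B $$ (i mod dim_row B, j mod dim_col B))"

(* matrix unit E^{(p)}_{ab} (0-based indices a,b < p) *)
definition matunit :: "nat \<Rightarrow> nat \<Rightarrow> nat \<Rightarrow> complex mat" where
  "matunit p a b = mat p p (\<lambda>(i,j). if i = a \<and> j = b then 1 else 0)"

definition msum :: "nat \<Rightarrow> nat \<Rightarrow> ('i \<Rightarrow> complex mat) \<Rightarrow> 'i set \<Rightarrow> complex mat" where
  "msum k l f I = mat k l (\<lambda>ij. \<Sum>x\<in>I. f x $$ ij)"

definition P_T :: "nat \<Rightarrow> nat \<Rightarrow> (nat \<Rightarrow> complex mat) \<Rightarrow> complex mat" where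
  "P_T n r V = msum (n*n) (n*n)
     (\<lambda>(s,a,b,c,d). ((V s $$ (a,b)) * cmat_conj (V s) $$ (c,d)) \<cdot>\<^sub>m kron (matunit n a c) (matunit n b d))
     ({0..<r} \<times> {0..<n} \<times> {0..<n} \<times> {0..<n} \<times> {0..<n})"

definition A_T :: "nat \<Rightarrow> nat \<Rightarrow> (nat \<Rightarrow> complex mat) \<Rightarrow> complex mat" where
  "A_T n r V = msum (r*n) (r*n)
     (\<lambda>(s,m). kron (matunit r s m)
        (msum n n (\<lambda>i. V i * cmat_conj (V s) * transpose_mat (V m) * cmat_adj (V i)) {0..<r}))
     ({0..<r} \<times> {0..<r})"

definition G :: "nat \<Rightarrow> nat \<Rightarrow> complex mat \<Rightarrow> nat \<Rightarrow> complex" where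
  "G n r A k = (of_nat k - of_nat (r*n) + mtrace A)^2
              - of_nat k * (of_nat k - of_nat (r*n) + mtrace (A * A))"

end

theory Submission
  imports Defs "Jordan_Normal_Form.Schur_Decomposition"
begin

(* Let W map e_s (x) e_y to e_y (x) vec V_s. Orthonormality of the V_s gives W^* W = 1, and one
   computes W W^* = 1 (x) P_T = P2 and W^* P1 W = A_T. Compressing
   Q^2 (P1 P2 P1 - P2 P1 P2) = P1 - P2 by X |-> W^* X W therefore yields
   Q^2 (A_T^2 - A_T) = A_T - 1, i.e. (A_T - 1)(Q^2 A_T - 1) = 0, so every eigenvalue of A_T is 1 or
   Q^-2. If m of them (with multiplicity, read off a Schur triangularisation) equal Q^-2, the traces
   of A_T and A_T^2 are explicit in m and G[A_T; k] = m (1 - Q^-2)^2 (m - k); take k = m, or k = 1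
   when m = 0. *)

lemma less_mult_cases:
  fixes i a b :: nat
  assumes "i < a * b"
  obtains j k where "j < a" "k < b" "i = j * b + k"
proof
  have "b > 0" using assms by (cases b) auto
  then show "i div b < a" "i mod b < b" "i = i div b * b + i mod b"
    using assms by (auto simp: less_mult_imp_div_less mult.commute)
qed

lemma less_cube_cases:
  fixes i n :: nat
  assumes "i < n * n * n"
  obtains x a b where "x < n" "a < n" "b < n" "i = (x * n + a) * n + b"
proof -
  obtain u b where u: "u < n * n" "b < n" "i = u * n + b" using assms by (rule less_mult_cases)
  obtain x a where "x < n" "a < n" "u = x * n + a" using u(1) by (rule less_mult_cases)
  then show thesis using u by (intro that[of x a b]) simp_all
qed

lemma pair_index_less:
  fixes j k a b :: nat
  assumes "j < a" "k < b"
  shows "j * b + k < a * b"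
proof -
  have "j * b + k < (j + 1) * b" using assms(2) by simp
  also have "\<dots> \<le> a * b" using assms(1) by (intro mult_right_mono) auto
  finally show ?thesis .
qed

lemma pair_index_eq_iff:
  fixes s m x y n :: nat
  assumes "x < n" "y < n"
  shows "s * n + x = m * n + y \<longleftrightarrow> s = m \<and> x = y"
proof
  assume eq: "s * n + x = m * n + y"
  have "s = m" using arg_cong[OF eq, of "\<lambda>t. t div n"] assms by simp
  moreover have "x = y" using arg_cong[OF eq, of "\<lambda>t. t mod n"] assms by simp
  ultimately show "s = m \<and> x = y" ..
qed simp

lemma sum_lessThan_mult:
  fixes f :: "nat \<Rightarrow> 'a :: comm_monoid_add"
  shows "(\<Sum>i<a * b. f i) = (\<Sum>j<a. \<Sum>k<b. f (j * b + k))"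
proof -
  have "(\<Sum>k\<in>{j * b..<j * b + b}. f k) = (\<Sum>k<b. f (j * b + k))" for j
    using sum.shift_bounds_nat_ivl[of f 0 "j * b" b] by (simp add: lessThan_atLeast0 add.commute)
  then show ?thesis using sum.nat_group[of f b a] by simp
qed

lemma sum_lessThan_cube:
  fixes f :: "nat \<Rightarrow> 'a :: comm_monoid_add"
  shows "(\<Sum>i<n * n * n. f i) = (\<Sum>x<n. \<Sum>a<n. \<Sum>b<n. f ((x * n + a) * n + b))"
  by (simp add: sum_lessThan_mult[of _ "n * n" n] sum_lessThan_mult[of _ n n])

lemma sum_if_zero: "(\<Sum>a\<in>A. if P then f a else 0) = (if P then sum f A else 0)"
  by simp

lemma dim_kron [simp]:
  "dim_row (kron A B) = dim_row A * dim_row B" "dim_col (kron A B) = dim_col A * dim_col B"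
  by (simp_all add: kron_def)

lemma kron_carrier:
  assumes "A \<in> carrier_mat m1 n1" "B \<in> carrier_mat m2 n2"
  shows "kron A B \<in> carrier_mat (m1 * m2) (n1 * n2)"
  using carrier_matD[OF assms(1)] carrier_matD[OF assms(2)] by (simp add: kron_def)

lemma index_kron:
  assumes "A \<in> carrier_mat m1 n1" "B \<in> carrier_mat m2 n2" "i < m1" "k < m2" "j < n1" "l < n2"
  shows "kron A B $$ (i * m2 + k, j * n2 + l) = A $$ (i,j) * B $$ (k,l)"
  using assms pair_index_less[of i m1 k m2] pair_index_less[of j n1 l n2] by (simp add: kron_def)

lemma index_matunit:
  "i < p \<Longrightarrow> j < p \<Longrightarrow> matunit p a b $$ (i,j) = (if i = a \<and> j = b then 1 else 0)"
  by (simp add: matunit_def)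

lemma matunit_carrier [simp]: "matunit p a b \<in> carrier_mat p p"
  by (simp add: matunit_def)

lemma dim_matunit [simp]: "dim_row (matunit p a b) = p" "dim_col (matunit p a b) = p"
  by (simp_all add: matunit_def)

lemma dim_msum [simp]: "dim_row (msum k l f I) = k" "dim_col (msum k l f I) = l"
  by (simp_all add: msum_def)

lemma msum_carrier [simp]: "msum k l f I \<in> carrier_mat k l"
  by (simp add: msum_def)

lemma index_msum: "i < k \<Longrightarrow> j < l \<Longrightarrow> msum k l f I $$ (i,j) = (\<Sum>x\<in>I. f x $$ (i,j))"
  by (simp add: msum_def)

lemma dim_cmat_conj [simp]: "dim_row (cmat_conj A) = dim_row A" "dim_col (cmat_conj A) = dim_col A"
  by (simp_all add: cmat_conj_def)

lemma cmat_conj_carrier: "A \<in> carrier_mat m n \<Longrightarrow> cmat_conj A \<in> carrier_mat m n"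
  by (simp add: cmat_conj_def carrier_matD)

lemma index_cmat_conj: "i < dim_row A \<Longrightarrow> j < dim_col A \<Longrightarrow> cmat_conj A $$ (i,j) = cnj (A $$ (i,j))"
  by (simp add: cmat_conj_def)

lemma dim_cmat_adj [simp]: "dim_row (cmat_adj A) = dim_col A" "dim_col (cmat_adj A) = dim_row A"
  by (simp_all add: cmat_adj_def cmat_conj_def)

lemma cmat_adj_carrier: "A \<in> carrier_mat m n \<Longrightarrow> cmat_adj A \<in> carrier_mat n m"
  by (simp add: cmat_adj_def cmat_conj_def carrier_matD)

lemma index_cmat_adj: "i < dim_col A \<Longrightarrow> j < dim_row A \<Longrightarrow> cmat_adj A $$ (i,j) = cnj (A $$ (j,i))"
  by (simp add: cmat_adj_def cmat_conj_def)

lemma mult_carrier_assoc: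
  "dim_col X = dim_row Y \<Longrightarrow> dim_col Y = dim_row Z \<Longrightarrow> X * Y * Z = X * (Y * (Z :: 'a :: semiring_0 mat))"
  by (rule assoc_mult_mat[of X "dim_row X" "dim_col X" Y "dim_col Y" Z "dim_col Z"]) auto

lemma index_mult_sum:
  "i < dim_row X \<Longrightarrow> j < dim_col Y \<Longrightarrow> dim_col X = m \<Longrightarrow> dim_row Y = m \<Longrightarrow>
    (X * Y) $$ (i,j) = (\<Sum>k<m. X $$ (i,k) * Y $$ (k,j))"
  by (simp add: scalar_prod_def lessThan_atLeast0)

lemma index_adj_mult:
  assumes "X \<in> carrier_mat k m" "Y \<in> carrier_mat k l" "i < m" "j < l"
  shows "(cmat_adj X * Y) $$ (i,j) = (\<Sum>t<k. cnj (X $$ (t,i)) * Y $$ (t,j))"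
proof -
  have "(cmat_adj X * Y) $$ (i,j) = (\<Sum>t<k. cmat_adj X $$ (i,t) * Y $$ (t,j))"
    using assms by (simp add: scalar_prod_def lessThan_atLeast0)
  also have "\<dots> = (\<Sum>t<k. cnj (X $$ (t,i)) * Y $$ (t,j))"
    using assms by (intro sum.cong refl) (simp add: index_cmat_adj)
  finally show ?thesis .
qed

lemma index_mult_adj:
  assumes "X \<in> carrier_mat m k" "Y \<in> carrier_mat l k" "i < m" "j < l"
  shows "(X * cmat_adj Y) $$ (i,j) = (\<Sum>t<k. X $$ (i,t) * cnj (Y $$ (j,t)))"
proof -
  have "(X * cmat_adj Y) $$ (i,j) = (\<Sum>t<k. X $$ (i,t) * cmat_adj Y $$ (t,j))"
    using assms by (simp add: scalar_prod_def lessThan_atLeast0)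
  also have "\<dots> = (\<Sum>t<k. X $$ (i,t) * cnj (Y $$ (j,t)))"
    using assms by (intro sum.cong refl) (simp add: index_cmat_adj)
  finally show ?thesis .
qed

lemma index_mult_mult_adj:
  assumes X: "X \<in> carrier_mat n n" and B: "B \<in> carrier_mat n n" and "x < n" "y < n"
  shows "(X * B * cmat_adj X) $$ (x,y) = (\<Sum>a<n. \<Sum>c<n. X $$ (x,a) * B $$ (a,c) * cnj (X $$ (y,c)))"
proof -
  have "(X * B * cmat_adj X) $$ (x,y) = (\<Sum>c<n. (X * B) $$ (x,c) * cnj (X $$ (y,c)))"
    using assms by (intro index_mult_adj) auto
  also have "\<dots> = (\<Sum>c<n. (\<Sum>a<n. X $$ (x,a) * B $$ (a,c)) * cnj (X $$ (y,c)))"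
    using assms by (intro sum.cong refl) (simp add: index_mult_sum[where m = n] del: index_mult_mat(1))
  also have "\<dots> = (\<Sum>a<n. \<Sum>c<n. X $$ (x,a) * B $$ (a,c) * cnj (X $$ (y,c)))"
    unfolding sum_distrib_right by (rule sum.swap)
  finally show ?thesis .
qed

lemma index_conj_mult_transpose:
  assumes "X \<in> carrier_mat k l" "Y \<in> carrier_mat m l" "a < k" "c < m"
  shows "(cmat_conj X * transpose_mat Y) $$ (a,c) = (\<Sum>d<l. cnj (X $$ (a,d)) * Y $$ (c,d))"
  using assms by (simp add: index_mult_sum[where m = l] index_cmat_conj del: index_mult_mat(1))

lemma mtrace_adj_mult:
  assumes "X \<in> carrier_mat m n" "Y \<in> carrier_mat m n"
  shows "mtrace (cmat_adj X * Y) = (\<Sum>a<m. \<Sum>b<n. cnj (X $$ (a,b)) * Y $$ (a,b))"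
proof -
  have "mtrace (cmat_adj X * Y) = (\<Sum>b<n. \<Sum>a<m. cnj (X $$ (a,b)) * Y $$ (a,b))"
    unfolding mtrace_def using assms
    by (intro sum.cong) (simp_all add: index_adj_mult[OF assms] del: index_mult_mat(1))
  also have "\<dots> = (\<Sum>a<m. \<Sum>b<n. cnj (X $$ (a,b)) * Y $$ (a,b))"
    by (rule sum.swap)
  finally show ?thesis .
qed

lemma mtrace_mult_comm:
  assumes "X \<in> carrier_mat m l" "Y \<in> carrier_mat l m"
  shows "mtrace (X * Y) = mtrace (Y * X)"
proof -
  have "mtrace (X * Y) = (\<Sum>i<m. \<Sum>j<l. X $$ (i,j) * Y $$ (j,i))"
    unfolding mtrace_def using assms by (intro sum.cong refl) (auto simp: scalar_prod_def lessThan_atLeast0)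
  also have "\<dots> = (\<Sum>j<l. \<Sum>i<m. Y $$ (j,i) * X $$ (i,j))"
    by (subst sum.swap) (simp add: mult.commute)
  also have "\<dots> = mtrace (Y * X)"
    unfolding mtrace_def using assms by (intro sum.cong refl) (auto simp: scalar_prod_def lessThan_atLeast0)
  finally show ?thesis .
qed

lemma upper_triangular_mult_diag:
  fixes B C :: "'a :: semiring_0 mat"
  assumes "B \<in> carrier_mat K K" "C \<in> carrier_mat K K" "upper_triangular B" "upper_triangular C" "i < K"
  shows "(B * C) $$ (i,i) = B $$ (i,i) * C $$ (i,i)"
proof -
  have "(B * C) $$ (i,i) = (\<Sum>j<K. B $$ (i,j) * C $$ (j,i))"
    using assms by (simp add: scalar_prod_def lessThan_atLeast0)
  also have "\<dots> = (\<Sum>j<K. if j = i then B $$ (i,i) * C $$ (i,i) else 0)"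
    using assms by (intro sum.cong refl) (auto dest: upper_triangularD simp: neq_iff)
  finally show ?thesis using assms(5) by simp
qed

lemma P_T_carrier [simp]: "P_T n r V \<in> carrier_mat (n * n) (n * n)"
  by (simp add: P_T_def msum_def)

lemma dim_P_T [simp]: "dim_row (P_T n r V) = n * n" "dim_col (P_T n r V) = n * n"
  by (simp_all add: P_T_def)

lemma index_P_T:
  assumes V: "\<forall>s<r. V s \<in> carrier_mat n n" and "a < n" "b < n" "c < n" "d < n"
  shows "P_T n r V $$ (a * n + b, c * n + d) = (\<Sum>s<r. V s $$ (a,b) * cnj (V s $$ (c,d)))"
proof -
  have dim_V: "dim_row (V s) = n" "dim_col (V s) = n" if "s < r" for s
    using V that by auto
  have "P_T n r V $$ (a * n + b, c * n + d) = (\<Sum>(s,y)\<in>{0..<r} \<times> ({0..<n} \<times> {0..<n} \<times> {0..<n} \<times> {0..<n}).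
      if y = (a,b,c,d) then V s $$ (a,b) * cnj (V s $$ (c,d)) else 0)"
    unfolding P_T_def using assms pair_index_less[of a n b n] pair_index_less[of c n d n]
    by (auto simp: index_msum index_kron[of _ n n _ n n] index_matunit index_cmat_conj dim_V intro!: sum.cong)
  also have "\<dots> = (\<Sum>s<r. V s $$ (a,b) * cnj (V s $$ (c,d)))"
    using assms
    by (subst sum.cartesian_product', simp only: case_prod_conv, simp add: sum.delta lessThan_atLeast0)
  finally show ?thesis .
qed

lemma A_T_carrier [simp]: "A_T n r V \<in> carrier_mat (r * n) (r * n)"
  by (simp add: A_T_def msum_def)

lemma dim_A_T [simp]: "dim_row (A_T n r V) = r * n" "dim_col (A_T n r V) = r * n"
  by (simp_all add: A_T_def)

lemma index_A_T:
  assumes "s < r" "m < r" "x < n" "y < n"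
  shows "A_T n r V $$ (s * n + x, m * n + y) =
    (\<Sum>i<r. (V i * cmat_conj (V s) * transpose_mat (V m) * cmat_adj (V i)) $$ (x,y))"
proof -
  have bounds: "s * n + x < r * n" "m * n + y < r * n"
    using assms by (simp_all add: pair_index_less)
  have "A_T n r V $$ (s * n + x, m * n + y) = (\<Sum>p\<in>{0..<r} \<times> {0..<r}.
      if p = (s,m) then (\<Sum>i<r. (V i * cmat_conj (V s) * transpose_mat (V m) * cmat_adj (V i)) $$ (x,y)) else 0)"
    unfolding A_T_def index_msum[OF bounds] using assms
    by (intro sum.cong refl)
      (auto simp: index_kron[of _ r r _ n n] index_matunit index_msum lessThan_atLeast0 split: if_splits)
  also have "\<dots> = (\<Sum>i<r. (V i * cmat_conj (V s) * transpose_mat (V m) * cmat_adj (V i)) $$ (x,y))"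
    using assms by simp
  finally show ?thesis .
qed

(* Rows (x,a,b) are encoded as (x * n + a) * n + b and columns (s,y) as s * n + y, so that
   W_T maps e_s (x) e_y to e_y (x) vec V_s. *)
definition W_T :: "nat \<Rightarrow> nat \<Rightarrow> (nat \<Rightarrow> complex mat) \<Rightarrow> complex mat" where
  "W_T n r V = mat (n * n * n) (r * n) (\<lambda>(i,p).
     if i div (n * n) = p mod n then V (p div n) $$ (i div n mod n, i mod n) else 0)"

lemma W_T_carrier [simp]: "W_T n r V \<in> carrier_mat (n * n * n) (r * n)"
  by (simp add: W_T_def)

lemma dim_W_T [simp]: "dim_row (W_T n r V) = n * n * n" "dim_col (W_T n r V) = r * n"
  by (simp_all add: W_T_def)

lemma index_W_T:
  assumes "x < n" "a < n" "b < n" "s < r" "y < n"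
  shows "W_T n r V $$ ((x * n + a) * n + b, s * n + y) = (if x = y then V s $$ (a,b) else 0)"
proof -
  have "(x * n + a) * n + b < n * n * n" "s * n + y < r * n"
    using assms by (auto intro!: pair_index_less)
  moreover have "((x * n + a) * n + b) div (n * n) = x"
    using assms by (simp add: div_mult2_eq)
  ultimately show ?thesis using assms by (simp add: W_T_def)
qed

lemma W_T_isometry:
  assumes V: "\<forall>s<r. V s \<in> carrier_mat n n"
    and ortho: "\<forall>s<r. \<forall>m<r. mtrace (cmat_adj (V s) * V m) = (if s = m then 1 else 0)"
  shows "cmat_adj (W_T n r V) * W_T n r V = 1\<^sub>m (r * n)"
proof (rule eq_matI)
  fix i j assume "i < dim_row (1\<^sub>m (r * n))" "j < dim_col (1\<^sub>m (r * n))"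
  then obtain s x m y where sx: "s < r" "x < n" "i = s * n + x" and my: "m < r" "y < n" "j = m * n + y"
    by (auto elim!: less_mult_cases)
  then have bounds: "i < r * n" "j < r * n" by (simp_all add: pair_index_less)
  have "(cmat_adj (W_T n r V) * W_T n r V) $$ (i,j) =
      (\<Sum>z<n. \<Sum>a<n. \<Sum>b<n. (if z = x then cnj (V s $$ (a,b)) else 0) * (if z = y then V m $$ (a,b) else 0))"
    unfolding index_adj_mult[OF W_T_carrier W_T_carrier bounds] sum_lessThan_cube
    using sx my by (intro sum.cong refl) (simp add: index_W_T)
  also have "\<dots> = (if x = y then \<Sum>a<n. \<Sum>b<n. cnj (V s $$ (a,b)) * V m $$ (a,b) else 0)"
    using sx my by (simp add: if_distrib[of "\<lambda>t. t * _"] sum_if_zero cong: if_cong)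
  also have "\<dots> = (if x = y then mtrace (cmat_adj (V s) * V m) else 0)"
    using V sx my by (simp add: mtrace_adj_mult[of _ n n])
  also have "\<dots> = 1\<^sub>m (r * n) $$ (i,j)"
    using ortho sx my bounds by (simp add: pair_index_eq_iff)
  finally show "(cmat_adj (W_T n r V) * W_T n r V) $$ (i,j) = 1\<^sub>m (r * n) $$ (i,j)" .
qed auto

lemma W_T_coisometry:
  assumes V: "\<forall>s<r. V s \<in> carrier_mat n n"
  shows "W_T n r V * cmat_adj (W_T n r V) = kron (1\<^sub>m n) (P_T n r V)"
proof (rule eq_matI)
  fix i j assume "i < dim_row (kron (1\<^sub>m n) (P_T n r V))" "j < dim_col (kron (1\<^sub>m n) (P_T n r V))"
  then have "i < n * n * n" "j < n * n * n" by (simp_all add: ac_simps)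
  then obtain x a b y c d where xab: "x < n" "a < n" "b < n" "i = (x * n + a) * n + b"
    and ycd: "y < n" "c < n" "d < n" "j = (y * n + c) * n + d"
    by (elim less_cube_cases)
  then have bounds: "i < n * n * n" "j < n * n * n" "a * n + b < n * n" "c * n + d < n * n"
    by (simp_all add: pair_index_less)
  have "(W_T n r V * cmat_adj (W_T n r V)) $$ (i,j) =
      (\<Sum>s<r. \<Sum>z<n. (if x = z then V s $$ (a,b) else 0) * cnj (if y = z then V s $$ (c,d) else 0))"
    unfolding index_mult_adj[OF W_T_carrier W_T_carrier bounds(1,2)] sum_lessThan_mult
    using xab ycd by (intro sum.cong refl) (simp add: index_W_T)
  also have "\<dots> = (if x = y then \<Sum>s<r. V s $$ (a,b) * cnj (V s $$ (c,d)) else 0)"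
    using xab ycd by (simp add: if_distrib[of "\<lambda>t. t * _"] if_distrib[of cnj] sum_if_zero cong: if_cong)
  also have "\<dots> = 1\<^sub>m n $$ (x,y) * P_T n r V $$ (a * n + b, c * n + d)"
    using V xab ycd by (simp add: index_P_T)
  also have "\<dots> = kron (1\<^sub>m n) (P_T n r V) $$ (x * (n * n) + (a * n + b), y * (n * n) + (c * n + d))"
    using xab ycd bounds by (simp add: index_kron[OF one_carrier_mat P_T_carrier])
  also have "\<dots> = kron (1\<^sub>m n) (P_T n r V) $$ (i,j)"
    using xab ycd by (simp add: algebra_simps)
  finally show "(W_T n r V * cmat_adj (W_T n r V)) $$ (i,j) = kron (1\<^sub>m n) (P_T n r V) $$ (i,j)" .
qed (simp_all add: ac_simps)

lemma index_adj_W_T_mult_kron: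
  assumes P: "P \<in> carrier_mat (n * n) (n * n)" and "s < r" "x < n" "z < n" "c < n" "d < n"
  shows "(cmat_adj (W_T n r V) * kron P (1\<^sub>m n)) $$ (s * n + x, (z * n + c) * n + d) =
    (\<Sum>a<n. cnj (V s $$ (a,d)) * P $$ (x * n + a, z * n + c))"
proof -
  have PI: "kron P (1\<^sub>m n) \<in> carrier_mat (n * n * n) (n * n * n)"
    using kron_carrier[OF P one_carrier_mat] .
  have row: "s * n + x < r * n" and col: "(z * n + c) * n + d < n * n * n"
    using assms by (simp_all add: pair_index_less)
  have "(cmat_adj (W_T n r V) * kron P (1\<^sub>m n)) $$ (s * n + x, (z * n + c) * n + d) = (\<Sum>z'<n. \<Sum>a<n. \<Sum>b<n.
      cnj (if z' = x then V s $$ (a,b) else 0) * (P $$ (z' * n + a, z * n + c) * 1\<^sub>m n $$ (b,d)))"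
    unfolding index_adj_mult[OF W_T_carrier PI row col] sum_lessThan_cube
    using assms by (intro sum.cong refl) (simp add: index_W_T index_kron[OF P] pair_index_less)
  also have "\<dots> = (\<Sum>a<n. cnj (V s $$ (a,d)) * P $$ (x * n + a, z * n + c))"
    using assms
    by (simp add: if_distrib[of cnj] if_distrib[of "\<lambda>t. t * _"] if_distrib[of "\<lambda>t. _ * t"] sum_if_zero
        cong: if_cong)
  finally show ?thesis .
qed

lemma index_W_T_compress_kron:
  assumes V: "\<forall>s<r. V s \<in> carrier_mat n n" and P: "P \<in> carrier_mat (n * n) (n * n)"
    and "s < r" "x < n" "m < r" "y < n"
  shows "(cmat_adj (W_T n r V) * kron P (1\<^sub>m n) * W_T n r V) $$ (s * n + x, m * n + y) =
    (\<Sum>a<n. \<Sum>c<n. P $$ (x * n + a, y * n + c) * (cmat_conj (V s) * transpose_mat (V m)) $$ (a,c))"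
proof -
  let ?M = "cmat_adj (W_T n r V) * kron P (1\<^sub>m n)"
  have sx: "s * n + x < r * n" and my: "m * n + y < r * n"
    using assms by (simp_all add: pair_index_less)
  have "(?M * W_T n r V) $$ (s * n + x, m * n + y) =
      (\<Sum>t<n * n * n. ?M $$ (s * n + x, t) * W_T n r V $$ (t, m * n + y))"
    using sx my P by (intro index_mult_sum) simp_all
  also have "\<dots> = (\<Sum>z<n. \<Sum>c<n. \<Sum>d<n. ?M $$ (s * n + x, (z * n + c) * n + d) * (if z = y then V m $$ (c,d) else 0))"
    unfolding sum_lessThan_cube using assms by (intro sum.cong refl) (simp add: index_W_T)
  also have "\<dots> = (\<Sum>c<n. \<Sum>d<n. ?M $$ (s * n + x, (y * n + c) * n + d) * V m $$ (c,d))"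
    using assms by (simp add: if_distrib[of "\<lambda>t. _ * t"] sum_if_zero cong: if_cong)
  also have "\<dots> = (\<Sum>c<n. \<Sum>d<n. \<Sum>a<n. P $$ (x * n + a, y * n + c) * (cnj (V s $$ (a,d)) * V m $$ (c,d)))"
    using assms
    by (intro sum.cong refl, subst index_adj_W_T_mult_kron[OF P])
      (simp_all add: sum_distrib_left sum_distrib_right ac_simps)
  also have "\<dots> = (\<Sum>c<n. \<Sum>a<n. \<Sum>d<n. P $$ (x * n + a, y * n + c) * (cnj (V s $$ (a,d)) * V m $$ (c,d)))"
    by (intro sum.cong refl sum.swap)
  also have "\<dots> = (\<Sum>a<n. \<Sum>c<n. P $$ (x * n + a, y * n + c) * (\<Sum>d<n. cnj (V s $$ (a,d)) * V m $$ (c,d)))"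
    unfolding sum_distrib_left by (rule sum.swap)
  also have "\<dots> = (\<Sum>a<n. \<Sum>c<n. P $$ (x * n + a, y * n + c) * (cmat_conj (V s) * transpose_mat (V m)) $$ (a,c))"
    using V assms by (intro sum.cong refl) (simp add: index_conj_mult_transpose[of _ n n _ n])
  finally show ?thesis .
qed

lemma W_T_compress_P_T:
  assumes V: "\<forall>s<r. V s \<in> carrier_mat n n"
  shows "cmat_adj (W_T n r V) * kron (P_T n r V) (1\<^sub>m n) * W_T n r V = A_T n r V"
proof (rule eq_matI)
  fix i j assume "i < dim_row (A_T n r V)" "j < dim_col (A_T n r V)"
  then obtain s x m y where sx: "s < r" "x < n" "i = s * n + x" and my: "m < r" "y < n" "j = m * n + y"
    by (auto elim!: less_mult_cases)
  define B where "B = cmat_conj (V s) * transpose_mat (V m)"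
  have Vsm: "V s \<in> carrier_mat n n" "V m \<in> carrier_mat n n" using V sx my by simp_all
  then have B: "B \<in> carrier_mat n n"
    unfolding B_def by (intro carrier_matI) (simp_all add: carrier_matD)
  have "(cmat_adj (W_T n r V) * kron (P_T n r V) (1\<^sub>m n) * W_T n r V) $$ (i,j) =
      (\<Sum>a<n. \<Sum>c<n. P_T n r V $$ (x * n + a, y * n + c) * B $$ (a,c))"
    using sx my unfolding B_def by (simp add: index_W_T_compress_kron[OF V P_T_carrier])
  also have "\<dots> = (\<Sum>a<n. \<Sum>c<n. (\<Sum>k<r. V k $$ (x,a) * cnj (V k $$ (y,c))) * B $$ (a,c))"
    using V sx my by (intro sum.cong refl) (simp add: index_P_T)
  also have "\<dots> = (\<Sum>a<n. \<Sum>k<r. \<Sum>c<n. V k $$ (x,a) * B $$ (a,c) * cnj (V k $$ (y,c)))"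
    unfolding sum_distrib_right by (intro sum.cong refl sum.swap[THEN trans]) (simp add: ac_simps)
  also have "\<dots> = (\<Sum>k<r. \<Sum>a<n. \<Sum>c<n. V k $$ (x,a) * B $$ (a,c) * cnj (V k $$ (y,c)))"
    by (rule sum.swap)
  also have "\<dots> = (\<Sum>k<r. (V k * B * cmat_adj (V k)) $$ (x,y))"
    using V B sx my by (intro sum.cong refl, subst index_mult_mult_adj) auto
  also have "\<dots> = A_T n r V $$ (i,j)"
  proof -
    have "V k * B = V k * cmat_conj (V s) * transpose_mat (V m)" if "k < r" for k
      using V Vsm that unfolding B_def by (intro assoc_mult_mat[symmetric] cmat_conj_carrier) auto
    then show ?thesis using sx my by (simp add: index_A_T)
  qed
  finally show "(cmat_adj (W_T n r V) * kron (P_T n r V) (1\<^sub>m n) * W_T n r V) $$ (i,j) = A_T n r V $$ (i,j)" .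
qed auto

lemma quadratic_relation_of_compression:
  fixes W W' P1 P2 :: "'a :: comm_ring_1 mat"
  assumes W: "W \<in> carrier_mat N k" and W': "W' \<in> carrier_mat k N" and P1: "P1 \<in> carrier_mat N N"
    and left_inv: "W' * W = 1\<^sub>m k" and P2: "P2 = W * W'"
    and rel: "c \<cdot>\<^sub>m (P1 * P2 * P1 - P2 * P1 * P2) = P1 - P2"
  shows "c \<cdot>\<^sub>m (W' * P1 * W * (W' * P1 * W) - W' * P1 * W) = W' * P1 * W - 1\<^sub>m k"
proof -
  let ?C = "\<lambda>X. W' * X * W"
  have P2_carrier: "P2 \<in> carrier_mat N N" using P2 W W' by simp
  have cancel: "W' * (W * X) = X" if "dim_row X = k" for X
    using that W W' left_inv by (metis assoc_mult_mat carrier_mat_triv left_mult_one_mat)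
  have C_minus: "?C (X - Y) = ?C X - ?C Y" if "X \<in> carrier_mat N N" "Y \<in> carrier_mat N N" for X Y
    using that W W' by (simp add: mult_minus_distrib_mat minus_mult_distrib_mat[of _ k N])
  have C_smult: "?C (c \<cdot>\<^sub>m X) = c \<cdot>\<^sub>m ?C X" if "X \<in> carrier_mat N N" for X
    using that W W' by (metis mult_smult_assoc_mat mult_smult_distrib mult_carrier_mat)
  have "?C (c \<cdot>\<^sub>m (P1 * P2 * P1 - P2 * P1 * P2)) = c \<cdot>\<^sub>m (?C (P1 * P2 * P1) - ?C (P2 * P1 * P2))"
    using P1 P2_carrier by (metis C_smult C_minus mult_carrier_mat minus_carrier_mat)
  moreover have "?C (P1 * P2 * P1) = ?C P1 * ?C P1"
    using W W' P1 unfolding P2 by (simp add: mult_carrier_assoc)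
  moreover have "?C (P2 * P1 * P2) = ?C P1"
    using W W' P1 unfolding P2 by (simp add: mult_carrier_assoc cancel left_inv)
  moreover have "?C P2 = 1\<^sub>m k"
    using W W' unfolding P2 by (simp add: mult_carrier_assoc cancel left_inv)
  ultimately show ?thesis using rel C_minus[OF P1 P2_carrier] by metis
qed

lemma sum_of_two_valued:
  assumes "\<forall>i<K. f i = 1 \<or> f i = d"
  shows "\<exists>m\<le>K. (\<Sum>i<K. f i) = of_nat (K - m) + of_nat m * (d :: 'a :: comm_semiring_1)"
  using assms
proof (induction K)
  case (Suc K)
  then obtain m where m: "m \<le> K" "(\<Sum>i<K. f i) = of_nat (K - m) + of_nat m * d" by auto
  show ?case
  proof (cases "f K = 1")
    case True
    then show ?thesis using m by (intro exI[of _ m]) (simp add: Suc_diff_le ac_simps)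
  next
    case False
    then have "f K = d" using Suc.prems by auto
    then show ?thesis using m by (intro exI[of _ "Suc m"]) (simp add: algebra_simps)
  qed
qed simp

lemma trace_of_quadratic_relation:
  fixes A :: "complex mat"
  assumes A: "A \<in> carrier_mat K K" and c: "c \<noteq> 0" and rel: "c \<cdot>\<^sub>m (A * A - A) = A - 1\<^sub>m K"
  shows "\<exists>m\<le>K. mtrace A = of_nat (K - m) + of_nat m / c"
proof -
  obtain es where "char_poly A = (\<Prod>a\<leftarrow>es. [:- a, 1:])" using char_poly_factorized[OF A] by auto
  then obtain B where B: "B \<in> carrier_mat K K" "upper_triangular B" "similar_mat A B"
    using schur_decomposition_exists[OF A] by auto
  then obtain P Q where PQ: "P \<in> carrier_mat K K" "Q \<in> carrier_mat K K"
    "P * Q = 1\<^sub>m K" "Q * P = 1\<^sub>m K" "A = P * B * Q"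
    using similar_matD[OF B(3)] A by (metis carrier_matD(1) insert_subset)
  have "Q * A * P = (Q * P) * B * (Q * P)"
    using PQ(1,2,5) B(1) by (simp add: mult_carrier_assoc)
  then have B_eq: "B = Q * A * P"
    using PQ B(1) by simp
  (* similarity invariance of the relation: compression with W = P, W' = Q and P2 = 1 *)
  have "c \<cdot>\<^sub>m (A * 1\<^sub>m K * A - 1\<^sub>m K * A * 1\<^sub>m K) = A - 1\<^sub>m K"
    using A rel by simp
  from quadratic_relation_of_compression[OF PQ(1,2) A PQ(4) PQ(3)[symmetric] this]
  have rel_B: "c \<cdot>\<^sub>m (B * B - B) = B - 1\<^sub>m K" unfolding B_eq .
  have "B $$ (i,i) = 1 \<or> B $$ (i,i) = 1 / c" if i: "i < K" for i
  proof -
    have "c * (B $$ (i,i) * B $$ (i,i) - B $$ (i,i)) = B $$ (i,i) - 1"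
      using arg_cong[OF rel_B, of "\<lambda>X. X $$ (i,i)"] i B
      by (simp add: upper_triangular_mult_diag[OF B(1) B(1) B(2) B(2) i])
    then have "(B $$ (i,i) - 1) * (c * B $$ (i,i) - 1) = 0" by (simp add: algebra_simps)
    then have "B $$ (i,i) - 1 = 0 \<or> c * B $$ (i,i) - 1 = 0" by (simp only: mult_eq_0_iff)
    then show ?thesis using c by (auto simp: field_simps)
  qed
  then obtain m where "m \<le> K" "(\<Sum>i<K. B $$ (i,i)) = of_nat (K - m) + of_nat m * (1 / c)"
    using sum_of_two_valued[of K "\<lambda>i. B $$ (i,i)" "1 / c"] by blast
  moreover have "mtrace A = mtrace B"
    using PQ B(1) mtrace_mult_comm[of P K K "B * Q"] by (simp add: mult_carrier_assoc)
  ultimately show ?thesis using B(1) unfolding mtrace_def by auto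
qed

lemma trace_square_of_quadratic_relation:
  fixes A :: "complex mat"
  assumes A: "A \<in> carrier_mat K K" and rel: "c \<cdot>\<^sub>m (A * A - A) = A - 1\<^sub>m K"
  shows "c * mtrace (A * A) = (c + 1) * mtrace A - of_nat K"
proof -
  have "c * (A * A) $$ (i,i) = (c + 1) * A $$ (i,i) - 1" if "i < K" for i
    using arg_cong[OF rel, of "\<lambda>X. X $$ (i,i)"] that A by (simp add: algebra_simps)
  then show ?thesis
    using A unfolding mtrace_def by (simp add: sum_distrib_left sum_subtractf)
qed

lemma G_root_of_quadratic_relation:
  fixes A :: "complex mat"
  assumes A: "A \<in> carrier_mat (r * n) (r * n)" and c: "c \<noteq> 0"
    and rel: "c \<cdot>\<^sub>m (A * A - A) = A - 1\<^sub>m (r * n)"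
  shows "\<exists>k>0. G n r A k = 0"
proof -
  obtain m where m: "m \<le> r * n" "mtrace A = of_nat (r * n - m) + of_nat m / c"
    using trace_of_quadratic_relation[OF A c rel] by blast
  define l where "l = r * n - m"
  have dim: "r * n = l + m" using m(1) l_def by simp
  have tr: "mtrace A = of_nat l + of_nat m / c" using m(2) l_def by simp
  have tr_sq: "mtrace (A * A) = ((c + 1) * mtrace A - of_nat (r * n)) / c"
    using trace_square_of_quadratic_relation[OF A rel] c by (simp add: field_simps)
  have "G n r A k = of_nat m * (1 - 1 / c)\<^sup>2 * (of_nat m - of_nat k)" for k
    unfolding G_def tr_sq tr dim using c by (simp add: field_simps power2_eq_square)
  then show ?thesis by (cases "m = 0") (auto intro: exI[of _ 1] exI[of _ m])
qed

theorem lemma7: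
  fixes n r :: nat and V :: "nat \<Rightarrow> complex mat" and Q :: real
  assumes "n \<ge> 2" and "r \<ge> 1"
    and "\<forall>s<r. V s \<in> carrier_mat n n"
    and "\<forall>s<r. \<forall>m<r. mtrace (cmat_adj (V s) * V m) = (if s = m then 1 else 0)"
    and "Q > 0"
    and "cmat_adj (P_T n r V) = P_T n r V"
    and "P_T n r V * P_T n r V = P_T n r V"
    and "(let P1 = kron (P_T n r V) (1\<^sub>m n); P2 = kron (1\<^sub>m n) (P_T n r V) in
          (complex_of_real (Q^2)) \<cdot>\<^sub>m (P1 * P2 * P1 - P2 * P1 * P2) = P1 - P2)"
  shows "\<exists>k::nat. k > 0 \<and> G n r (A_T n r V) k = 0"
proof -
  note V = assms(3) and ortho = assms(4)
  let ?c = "complex_of_real (Q\<^sup>2)"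
  have "?c \<cdot>\<^sub>m (A_T n r V * A_T n r V - A_T n r V) = A_T n r V - 1\<^sub>m (r * n)"
    using quadratic_relation_of_compression[OF W_T_carrier cmat_adj_carrier[OF W_T_carrier]
        kron_carrier[OF P_T_carrier one_carrier_mat] W_T_isometry[OF V ortho]
        W_T_coisometry[OF V, symmetric] assms(8)[unfolded Let_def]]
    unfolding W_T_compress_P_T[OF V] .
  moreover have "?c \<noteq> 0" using assms(5) by simp
  ultimately show ?thesis using G_root_of_quadratic_relation[OF A_T_carrier] by blast
qed

end
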